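(* Let $G$ be a connected finite simple graph with at least two vertices. Then its Cheeger constant satisfies $h(G)\geq \dfrac{1}{2(\tau(G)-1)}$.
   Context: $K=D-A$ is the Kirchhoff matrix of $G$ and $\tau(G)={\rm det}(1+K)/{\rm Det}(K)=\prod_{\lambda\neq0}(1+1/\lambda)$, the product over the non-zero eigenvalues of $K$ with multiplicity. The Cheeger constant is $h(G)=\min\{|E(S,V\setminus S)|/|S| : S\subset V,\ 0<|S|\leq |V|/2\}$, where $E(S,V\setminus S)$ is the set of edges with one endpoint in $S$ and one in $V\setminus S$. *)

theory Defs
  imports "Jordan_Normal_Form.Char_Poly"
begin

definition simple_graph :: "nat \<Rightarrow> (nat \<Rightarrow> nat \<Rightarrow> bool) \<Rightarrow> bool" where
  "simple_graph n E \<longleftrightarrow>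
     (\<forall>i j. E i j \<longrightarrow> i < n \<and> j < n) \<and> (\<forall>i j. E i j \<longrightarrow> E j i) \<and> (\<forall>i. \<not> E i i)"

definition connected_graph :: "nat \<Rightarrow> (nat \<Rightarrow> nat \<Rightarrow> bool) \<Rightarrow> bool" where
  "connected_graph n E \<longleftrightarrow> (\<forall>i<n. \<forall>j<n. E\<^sup>*\<^sup>* i j)"

definition degree :: "nat \<Rightarrow> (nat \<Rightarrow> nat \<Rightarrow> bool) \<Rightarrow> nat \<Rightarrow> nat" where
  "degree n E i = card {j. j < n \<and> E i j}"

definition adjacency_matrix :: "nat \<Rightarrow> (nat \<Rightarrow> nat \<Rightarrow> bool) \<Rightarrow> real mat" where
  "adjacency_matrix n E = mat n n (\<lambda>(i, j). if E i j then 1 else 0)"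

definition degree_matrix :: "nat \<Rightarrow> (nat \<Rightarrow> nat \<Rightarrow> bool) \<Rightarrow> real mat" where
  "degree_matrix n E = mat n n (\<lambda>(i, j). if i = j then real (degree n E i) else 0)"

definition kirchhoff :: "nat \<Rightarrow> (nat \<Rightarrow> nat \<Rightarrow> bool) \<Rightarrow> real mat" where
  "kirchhoff n E = degree_matrix n E - adjacency_matrix n E"

definition pdet :: "real mat \<Rightarrow> real" where
  "pdet K = (\<Prod>x\<in>{x. eigenvalue K x \<and> x \<noteq> 0}. x ^ order x (char_poly K))"

definition tau :: "nat \<Rightarrow> (nat \<Rightarrow> nat \<Rightarrow> bool) \<Rightarrow> real" where
  "tau n E = det (1\<^sub>m n + kirchhoff n E) / pdet (kirchhoff n E)"

text \<open>Edges between S and its complement in {0..<n}; each such edge corresponds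
  to exactly one ordered pair (i,j) with i in S and j not in S.\<close>
definition edge_boundary :: "nat \<Rightarrow> (nat \<Rightarrow> nat \<Rightarrow> bool) \<Rightarrow> nat set \<Rightarrow> (nat \<times> nat) set" where
  "edge_boundary n E S = {(i, j). i \<in> S \<and> j < n \<and> j \<notin> S \<and> E i j}"

definition cheeger :: "nat \<Rightarrow> (nat \<Rightarrow> nat \<Rightarrow> bool) \<Rightarrow> real" where
  "cheeger n E = Min ((\<lambda>S. real (card (edge_boundary n E S)) / real (card S)) `
      {S. S \<subseteq> {0..<n} \<and> 0 < card S \<and> real (card S) \<le> real n / 2})"

end

(*
  The Kirchhoff matrix K is real symmetric, hence K = U D U^T with U orthonormal and D
  diagonal.  Because 2 x.Kx is the sum of (x_i - x_j)^2 over ordered pairs of adjacent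
  vertices, the eigenvalues d_i are nonnegative and, the graph being connected, the
  eigenvectors with d_i = 0 are constant.  tau(G) is the product of (1 + 1/d)^m over the
  nonzero eigenvalues d of multiplicity m; every factor is at least 1, so
  tau(G) >= 1 + 1/d for each nonzero eigenvalue d.

  Let S attain h(G) and let f = n 1_S - |S| 1.  This cut vector is orthogonal to the
  constants, and f.Kf / f.f = n |E(S, V - S)| / (|S| (n - |S|)) <= 2 h(G) since
  |S| <= n/2.  Expanding f in the eigenbasis yields a nonzero eigenvalue d <= 2 h(G),
  whence tau(G) - 1 >= 1/d >= 1/(2 h(G)).
*)
theory Submission
  imports Defs "Jordan_Normal_Form.Schur_Decomposition"
begin

section \<open>Orthonormal matrices\<close>

text \<open>Unlike the library's \<open>orthogonal_mat\<close>, this asks for unit columns.\<close>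
definition orthonormal_mat :: "nat \<Rightarrow> 'a :: comm_ring_1 mat \<Rightarrow> bool" where
  "orthonormal_mat n U \<longleftrightarrow> U \<in> carrier_mat n n \<and> transpose_mat U * U = 1\<^sub>m n"

lemma orthonormal_mat_mult_transpose:
  fixes U :: "'a :: field mat"
  assumes "orthonormal_mat n U"
  shows "U * transpose_mat U = 1\<^sub>m n"
  using assms mat_mult_left_right_inverse[of "transpose_mat U" n U]
  unfolding orthonormal_mat_def by auto

lemma orthonormal_mat_col_carrier:
  assumes "orthonormal_mat n U"
  shows "col U i \<in> carrier_vec n"
  using assms carrier_matD(1)[of U n n] unfolding orthonormal_mat_def by (intro carrier_vecI) simp

lemma orthonormal_mat_mult:
  assumes "orthonormal_mat n U" and "orthonormal_mat n V"
  shows "orthonormal_mat n (U * V)"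
proof -
  have U: "U \<in> carrier_mat n n" and V: "V \<in> carrier_mat n n"
    using assms unfolding orthonormal_mat_def by auto
  have "transpose_mat (U * V) * (U * V) = transpose_mat V * ((transpose_mat U * U) * V)"
    using U V by (simp add: transpose_mult assoc_mult_mat[of _ n n _ n _ n])
  also have "\<dots> = 1\<^sub>m n"
    using assms V unfolding orthonormal_mat_def by simp
  finally show ?thesis
    using U V unfolding orthonormal_mat_def by simp
qed

lemma mult_four_block_diag_mat:
  fixes A1 B1 :: "'a :: semiring_0 mat"
  assumes "A1 \<in> carrier_mat n1 n1" "B1 \<in> carrier_mat n1 n1" "A2 \<in> carrier_mat n2 n2" "B2 \<in> carrier_mat n2 n2"
  shows "four_block_mat A1 (0\<^sub>m n1 n2) (0\<^sub>m n2 n1) A2 * four_block_mat B1 (0\<^sub>m n1 n2) (0\<^sub>m n2 n1) B2 =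
    four_block_mat (A1 * B1) (0\<^sub>m n1 n2) (0\<^sub>m n2 n1) (A2 * B2)"
  using assms by (subst mult_four_block_mat[of _ n1 n1 _ n2 _ n2 _ _ n1 _ n2]) auto

lemma transpose_four_block_diag_mat:
  assumes "A1 \<in> carrier_mat n1 n1" "A2 \<in> carrier_mat n2 n2"
  shows "transpose_mat (four_block_mat A1 (0\<^sub>m n1 n2) (0\<^sub>m n2 n1) A2) =
    four_block_mat (transpose_mat A1) (0\<^sub>m n1 n2) (0\<^sub>m n2 n1) (transpose_mat A2)"
  using assms by (subst transpose_four_block_mat) auto

lemma orthonormal_mat_four_block:
  assumes "orthonormal_mat m U"
  shows "orthonormal_mat (Suc m) (four_block_mat (1\<^sub>m 1) (0\<^sub>m 1 m) (0\<^sub>m m 1) U)"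
    (is "orthonormal_mat _ ?B")
proof -
  have U: "U \<in> carrier_mat m m" and UTU: "transpose_mat U * U = 1\<^sub>m m"
    using assms unfolding orthonormal_mat_def by auto
  have "transpose_mat ?B * ?B = 1\<^sub>m (1 + m)"
    using U by (simp add: transpose_four_block_diag_mat mult_four_block_diag_mat UTU del: One_nat_def)
  moreover have "?B \<in> carrier_mat (1 + m) (1 + m)"
    using U by auto
  ultimately show ?thesis
    unfolding orthonormal_mat_def by simp
qed

lemma orthonormal_mat_of_normalized_cols:
  fixes ws :: "real vec list"
  assumes ws: "set ws \<subseteq> carrier_vec n" and orth: "corthogonal ws" and len: "length ws = n"
  shows "orthonormal_mat n (mat_of_cols n (map (\<lambda>w. (1 / sqrt (w \<bullet> w)) \<cdot>\<^sub>v w) ws))"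
    (is "orthonormal_mat n ?W")
proof -
  have ws_i: "ws ! i \<in> carrier_vec n" if "i < n" for i
    using ws len that by auto
  have col_W: "col ?W i = (1 / sqrt (ws ! i \<bullet> ws ! i)) \<cdot>\<^sub>v ws ! i" if "i < n" for i
    using that len ws_i by simp
  have "transpose_mat ?W * ?W = 1\<^sub>m n"
  proof (rule eq_matI)
    fix i j assume "i < dim_row (1\<^sub>m n)" "j < dim_col (1\<^sub>m n)"
    then have i: "i < n" and j: "j < n" by auto
    have orth_ij: "ws ! i \<bullet> ws ! j = 0 \<longleftrightarrow> i \<noteq> j"
      using orth len i j unfolding corthogonal_def by simp
    have "(transpose_mat ?W * ?W) $$ (i, j) = col ?W i \<bullet> col ?W j"
      using i j len by simp
    also have "\<dots> = (ws ! i \<bullet> ws ! j) / (sqrt (ws ! i \<bullet> ws ! i) * sqrt (ws ! j \<bullet> ws ! j))"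
      using ws_i[OF i] ws_i[OF j] by (simp add: col_W i j)
    also have "\<dots> = 1\<^sub>m n $$ (i, j)"
    proof (cases "i = j")
      case True
      have "ws ! i \<bullet> ws ! i > 0"
        using conjugate_square_ge_0_vec[of "ws ! i"] orth_ij True by (simp add: order_le_less)
      then show ?thesis using True i by simp
    next
      case False
      then show ?thesis using orth_ij i j by simp
    qed
    finally show "(transpose_mat ?W * ?W) $$ (i, j) = 1\<^sub>m n $$ (i, j)" .
  qed (use len in auto)
  moreover have "?W \<in> carrier_mat n n"
    using mat_of_cols_carrier(1)[of n] len by (metis length_map)
  ultimately show ?thesis unfolding orthonormal_mat_def by simp
qed

lemma orthonormal_completion:
  fixes u :: "real vec"
  assumes u: "u \<in> carrier_vec n" and u_unit: "u \<bullet> u = 1"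
  obtains W where "orthonormal_mat n W" and "col W 0 = u"
proof -
  interpret cof_vec_space n "TYPE(real)" .
  have u0: "u \<noteq> 0\<^sub>v n" using u u_unit by auto
  then have "n > 0" using u by (cases n) auto
  note b = basis_completion[OF u u0]
  obtain vs where b_def: "basis_completion u = u # vs"
    using b(6,7) \<open>n > 0\<close> by (cases "basis_completion u") auto
  define ws where "ws = gram_schmidt n (basis_completion u)"
  note gs = gram_schmidt_result[OF b(2,4,5) ws_def]
  have "hd ws = u" unfolding ws_def b_def using u by simp
  with gs b \<open>n > 0\<close> obtain ws' where ws: "ws = u # ws'"
    by (cases ws) auto
  define W where "W = mat_of_cols n (map (\<lambda>w. (1 / sqrt (w \<bullet> w)) \<cdot>\<^sub>v w) ws)"
  have "orthonormal_mat n W"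
    unfolding W_def using gs b by (intro orthonormal_mat_of_normalized_cols) auto
  moreover have "col W 0 = u"
    using \<open>n > 0\<close> u u_unit by (simp add: W_def ws)
  ultimately show thesis by (rule that)
qed

section \<open>The spectral theorem for real symmetric matrices\<close>

lemma conjugate_of_real_mat_mult_vec:
  fixes A :: "real mat" and v :: "complex vec"
  assumes "A \<in> carrier_mat n n" and "v \<in> carrier_vec n"
  shows "conjugate (map_mat complex_of_real A *\<^sub>v v) = map_mat complex_of_real A *\<^sub>v conjugate v"
  using assms by (intro eq_vecI) (auto simp: scalar_prod_def sum_conjugate conjugate_dist_mul)

lemma real_symmetric_mat_has_eigenvalue:
  fixes A :: "real mat"
  assumes A: "A \<in> carrier_mat n n" and sym: "transpose_mat A = A" and "n > 0"
  shows "\<exists>l. eigenvalue A l"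
proof -
  let ?C = "map_mat complex_of_real A"
  have C: "?C \<in> carrier_mat n n" using A by simp
  obtain as where cp: "char_poly ?C = (\<Prod>a\<leftarrow>as. [:-a, 1:])" and "length as = n"
    using char_poly_factorized[OF C] by blast
  with \<open>n > 0\<close> obtain z where "poly (char_poly ?C) z = 0"
    by (cases as) auto
  then obtain v where v: "v \<in> carrier_vec n" "v \<noteq> 0\<^sub>v n" and Cv: "?C *\<^sub>v v = z \<cdot>\<^sub>v v"
    using C unfolding eigenvalue_root_char_poly[OF C, symmetric] eigenvalue_def eigenvector_def
    by auto
  have CT: "transpose_mat ?C = ?C" using sym by (metis map_mat_transpose)
  have "z * (conjugate v \<bullet> v) = conjugate v \<bullet> (?C *\<^sub>v v)"
    using v by (simp add: Cv)
  also have "\<dots> = (transpose_mat ?C *\<^sub>v conjugate v) \<bullet> v"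
    using C v by (simp add: transpose_vec_mult_scalar)
  also have "\<dots> = cnj z * (conjugate v \<bullet> v)"
    using A v by (simp add: CT conjugate_of_real_mat_mult_vec[symmetric] Cv conjugate_smult_vec)
  finally have "(z - cnj z) * (conjugate v \<bullet> v) = 0"
    by (simp add: algebra_simps)
  moreover have "conjugate v \<bullet> v \<noteq> 0"
    using v conjugate_square_eq_0_vec[OF v(1)] comm_scalar_prod[OF carrier_vec_conjugate[OF v(1)] v(1)]
    by simp
  ultimately have "cnj z = z"
    by simp
  then have "z = complex_of_real (Re z)"
    by (auto simp: complex_eq_iff)
  with \<open>poly (char_poly ?C) z = 0\<close> have "poly (char_poly A) (Re z) = 0"
    by (metis A of_real_hom.char_poly_hom of_real_hom.poly_map_poly of_real_eq_0_iff)
  then show ?thesis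
    using eigenvalue_root_char_poly[OF A] by blast
qed

lemma symmetric_mat_four_block_split:
  fixes A :: "'a :: comm_ring_1 mat"
  assumes A: "A \<in> carrier_mat (Suc m) (Suc m)" and sym: "transpose_mat A = A"
    and col0: "col A 0 = l \<cdot>\<^sub>v unit_vec (Suc m) 0"
  obtains A3 where "A3 \<in> carrier_mat m m" and "transpose_mat A3 = A3"
    and "A = four_block_mat (mat 1 1 (\<lambda>_. l)) (0\<^sub>m 1 m) (0\<^sub>m m 1) A3"
proof -
  have A_sym: "A $$ (i, j) = A $$ (j, i)" if "i < Suc m" "j < Suc m" for i j
    using that A sym by (metis carrier_matD index_transpose_mat(1))
  have A_col0: "A $$ (i, 0) = (if i = 0 then l else 0)" if "i < Suc m" for i
    using arg_cong[OF col0, of "\<lambda>v. v $ i"] that A by auto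
  define A3 where "A3 = mat m m (\<lambda>(i, j). A $$ (Suc i, Suc j))"
  have "A3 \<in> carrier_mat m m"
    unfolding A3_def by simp
  moreover have "transpose_mat A3 = A3"
    unfolding A3_def by (rule eq_matI) (auto simp: A_sym)
  moreover have "A = four_block_mat (mat 1 1 (\<lambda>_. l)) (0\<^sub>m 1 m) (0\<^sub>m m 1) A3"
  proof (rule eq_matI)
    fix i j assume "i < dim_row (four_block_mat (mat 1 1 (\<lambda>_. l)) (0\<^sub>m 1 m) (0\<^sub>m m 1) A3)"
      "j < dim_col (four_block_mat (mat 1 1 (\<lambda>_. l)) (0\<^sub>m 1 m) (0\<^sub>m m 1) A3)"
    then have i: "i < Suc m" and j: "j < Suc m"
      by (auto simp: A3_def)
    show "A $$ (i, j) = four_block_mat (mat 1 1 (\<lambda>_. l)) (0\<^sub>m 1 m) (0\<^sub>m m 1) A3 $$ (i, j)"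
      using A_col0[OF i] A_col0[OF j] A_sym[OF i j] i j
      by (cases i; cases j) (auto simp: A3_def)
  qed (use A in \<open>auto simp: A3_def\<close>)
  ultimately show thesis
    by (rule that)
qed

lemma symmetric_mat_orthonormal_deflation:
  fixes A W :: "'a :: field mat"
  assumes A: "A \<in> carrier_mat (Suc m) (Suc m)" and sym: "transpose_mat A = A"
    and W: "orthonormal_mat (Suc m) W" and eigen: "A *\<^sub>v col W 0 = l \<cdot>\<^sub>v col W 0"
  obtains A3 where "A3 \<in> carrier_mat m m" and "transpose_mat A3 = A3"
    and "transpose_mat W * A * W = four_block_mat (mat 1 1 (\<lambda>_. l)) (0\<^sub>m 1 m) (0\<^sub>m m 1) A3"
proof (rule symmetric_mat_four_block_split[of "transpose_mat W * A * W" m l])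
  let ?n = "Suc m"
  have W_carr: "W \<in> carrier_mat ?n ?n" and WTW: "transpose_mat W * W = 1\<^sub>m ?n"
    using W unfolding orthonormal_mat_def by auto
  show "transpose_mat W * A * W \<in> carrier_mat ?n ?n"
    using W_carr A by simp
  have "transpose_mat (transpose_mat W * A * W) = transpose_mat W * transpose_mat (transpose_mat W * A)"
    using W_carr A by (intro transpose_mult) auto
  also have "transpose_mat (transpose_mat W * A) = A * W"
    using W_carr A sym by (subst transpose_mult) auto
  finally show "transpose_mat (transpose_mat W * A * W) = transpose_mat W * A * W"
    using W_carr A by (simp add: assoc_mult_mat[of _ ?n ?n _ ?n _ ?n])
  have W0: "col W 0 \<in> carrier_vec ?n"
    using col_carrier_vec[OF _ W_carr] by simp
  have "col (transpose_mat W * A * W) 0 = (transpose_mat W * A) *\<^sub>v col W 0"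
    using W_carr A by (intro col_mult2[of _ ?n ?n]) auto
  also have "\<dots> = transpose_mat W *\<^sub>v (A *\<^sub>v col W 0)"
    using W_carr A W0 by (simp add: assoc_mult_mat_vec[of _ ?n ?n _ ?n])
  also have "\<dots> = l \<cdot>\<^sub>v (transpose_mat W *\<^sub>v col W 0)"
    unfolding eigen using W_carr W0 by (simp add: mult_mat_vec[of _ ?n ?n])
  also have "transpose_mat W *\<^sub>v col W 0 = col (transpose_mat W * W) 0"
    using col_mult2[of "transpose_mat W" ?n ?n W ?n 0] W_carr by simp
  finally show "col (transpose_mat W * A * W) 0 = l \<cdot>\<^sub>v unit_vec ?n 0"
    unfolding WTW by simp
qed (rule that)

lemma real_symmetric_mat_unit_eigenvector:
  fixes A :: "real mat"
  assumes A: "A \<in> carrier_mat n n" and sym: "transpose_mat A = A" and "n > 0"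
  obtains l u where "u \<in> carrier_vec n" and "u \<bullet> u = 1" and "A *\<^sub>v u = l \<cdot>\<^sub>v u"
proof -
  obtain l v where v: "v \<in> carrier_vec n" "v \<noteq> 0\<^sub>v n" and Av: "A *\<^sub>v v = l \<cdot>\<^sub>v v"
    using real_symmetric_mat_has_eigenvalue[OF assms] A
    unfolding eigenvalue_def eigenvector_def by auto
  define u where "u = (1 / sqrt (v \<bullet> v)) \<cdot>\<^sub>v v"
  have "v \<bullet> v > 0"
    using conjugate_square_greater_0_vec[OF v(1)] v(2) by simp
  then have "u \<in> carrier_vec n" and "u \<bullet> u = 1"
    unfolding u_def using v(1) by simp_all
  moreover have "A *\<^sub>v u = l \<cdot>\<^sub>v u"
    unfolding u_def using A v(1) by (simp add: mult_mat_vec Av smult_smult_assoc mult.commute)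
  ultimately show thesis
    by (rule that)
qed

lemma orthonormal_decomposition_four_block:
  fixes A W U3 D3 :: "'a :: field mat"
  assumes W: "orthonormal_mat (Suc m) W" and A: "A \<in> carrier_mat (Suc m) (Suc m)"
    and U3: "orthonormal_mat m U3" and D3: "D3 \<in> carrier_mat m m" "diagonal_mat D3"
    and WAW: "transpose_mat W * A * W =
      four_block_mat (mat 1 1 (\<lambda>_. l)) (0\<^sub>m 1 m) (0\<^sub>m m 1) (U3 * D3 * transpose_mat U3)"
  shows "\<exists>U D. orthonormal_mat (Suc m) U \<and> D \<in> carrier_mat (Suc m) (Suc m) \<and> diagonal_mat D \<and>
    A = U * D * transpose_mat U"
proof -
  let ?n = "Suc m"
  define B where "B = four_block_mat (1\<^sub>m 1) (0\<^sub>m 1 m) (0\<^sub>m m 1) U3"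
  define D where "D = four_block_mat (mat 1 1 (\<lambda>_. l)) (0\<^sub>m 1 m) (0\<^sub>m m 1) D3"
  have B: "orthonormal_mat ?n B"
    unfolding B_def using U3 by (rule orthonormal_mat_four_block)
  have W_carr: "W \<in> carrier_mat ?n ?n" and B_carr: "B \<in> carrier_mat ?n ?n"
    and U3_carr: "U3 \<in> carrier_mat m m"
    using W B U3 unfolding orthonormal_mat_def by auto
  have D: "D \<in> carrier_mat ?n ?n"
    unfolding D_def using D3 by auto
  have "B * D * transpose_mat B = transpose_mat W * A * W"
    unfolding WAW B_def D_def using U3_carr D3
    by (simp add: transpose_four_block_diag_mat mult_four_block_diag_mat assoc_mult_mat[of _ m m _ m _ m]
        del: One_nat_def)
  then have "W * (B * D * transpose_mat B) * transpose_mat W =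
      (W * transpose_mat W) * A * (W * transpose_mat W)"
    using W_carr A by (simp add: assoc_mult_mat[of _ ?n ?n _ ?n _ ?n])
  also have "\<dots> = A"
    using W A by (simp add: orthonormal_mat_mult_transpose)
  finally have "A = (W * B) * D * transpose_mat (W * B)"
    using W_carr B_carr D by (simp add: assoc_mult_mat[of _ ?n ?n _ ?n _ ?n] transpose_mult[of _ ?n ?n])
  moreover have "diagonal_mat D"
    using D3 unfolding D_def diagonal_mat_def by auto
  ultimately show ?thesis
    using orthonormal_mat_mult[OF W B] D by blast
qed

theorem real_symmetric_mat_spectral_decomposition:
  fixes A :: "real mat"
  assumes "A \<in> carrier_mat n n" and "transpose_mat A = A"
  shows "\<exists>U D. orthonormal_mat n U \<and> D \<in> carrier_mat n n \<and> diagonal_mat D \<and>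
    A = U * D * transpose_mat U"
  using assms
proof (induction n arbitrary: A)
  case 0
  then show ?case
    by (intro exI[of _ "1\<^sub>m 0"] exI[of _ A])
      (auto simp: orthonormal_mat_def diagonal_mat_def intro!: eq_matI)
next
  case (Suc m)
  then have A: "A \<in> carrier_mat (Suc m) (Suc m)" and sym: "transpose_mat A = A"
    by auto
  obtain l u where u: "u \<in> carrier_vec (Suc m)" "u \<bullet> u = 1" and Au: "A *\<^sub>v u = l \<cdot>\<^sub>v u"
    using real_symmetric_mat_unit_eigenvector[OF A sym] by blast
  obtain W where W: "orthonormal_mat (Suc m) W" and W0: "col W 0 = u"
    using orthonormal_completion[OF u] .
  obtain A3 where A3: "A3 \<in> carrier_mat m m" "transpose_mat A3 = A3"
    and WAW: "transpose_mat W * A * W = four_block_mat (mat 1 1 (\<lambda>_. l)) (0\<^sub>m 1 m) (0\<^sub>m m 1) A3"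
    using symmetric_mat_orthonormal_deflation[OF A sym W] Au W0 by metis
  obtain U3 D3 where U3: "orthonormal_mat m U3" and D3: "D3 \<in> carrier_mat m m" "diagonal_mat D3"
    and "A3 = U3 * D3 * transpose_mat U3"
    using Suc.IH[OF A3] by blast
  with WAW show ?case
    using orthonormal_decomposition_four_block[OF W A U3 D3] by simp
qed

lemma diagonal_mat_mult_vec:
  assumes "D \<in> carrier_mat n n" "diagonal_mat D" "v \<in> carrier_vec n" "i < n"
  shows "(D *\<^sub>v v) $ i = D $$ (i, i) * v $ i"
proof -
  have "(D *\<^sub>v v) $ i = (\<Sum>j\<in>{0..<n}. D $$ (i, j) * v $ j)"
    using assms by (simp add: scalar_prod_def)
  also have "\<dots> = D $$ (i, i) * v $ i"
    using assms by (subst sum.remove[of _ i]) (auto simp: diagonal_mat_def intro!: sum.neutral)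
  finally show ?thesis .
qed

lemma orthonormal_decomposition_eigenvector:
  fixes U D :: "'a :: field mat"
  assumes U: "orthonormal_mat n U" and D: "D \<in> carrier_mat n n" "diagonal_mat D" and i: "i < n"
  shows "(U * D * transpose_mat U) *\<^sub>v col U i = D $$ (i, i) \<cdot>\<^sub>v col U i"
proof -
  have U_carr: "U \<in> carrier_mat n n" and UTU: "transpose_mat U * U = 1\<^sub>m n"
    using U unfolding orthonormal_mat_def by auto
  have "(U * D * transpose_mat U) * U = U * D * (transpose_mat U * U)"
    using U_carr D by (intro assoc_mult_mat) auto
  then have "(U * D * transpose_mat U) * U = U * D"
    using U_carr D by (simp add: UTU)
  then have "(U * D * transpose_mat U) *\<^sub>v col U i = col (U * D) i"
    using U_carr D i by (metis col_mult2 mult_carrier_mat transpose_carrier_mat)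
  also have "\<dots> = U *\<^sub>v col D i"
    using col_mult2[of U n n D n i] U_carr D i by simp
  also have "col D i = D $$ (i, i) \<cdot>\<^sub>v unit_vec n i"
    using D i by (auto simp: diagonal_mat_def)
  also have "U *\<^sub>v (D $$ (i, i) \<cdot>\<^sub>v unit_vec n i) = D $$ (i, i) \<cdot>\<^sub>v (U *\<^sub>v unit_vec n i)"
    using U_carr by (intro mult_mat_vec) auto
  also have "U *\<^sub>v unit_vec n i = col U i"
    using U_carr i by (intro eq_vecI) auto
  finally show ?thesis .
qed

lemma orthonormal_decomposition_diag_eq:
  fixes U D :: "'a :: field mat"
  assumes U: "orthonormal_mat n U" and D: "D \<in> carrier_mat n n" "diagonal_mat D" and i: "i < n"
  shows "D $$ (i, i) = col U i \<bullet> ((U * D * transpose_mat U) *\<^sub>v col U i)"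
proof -
  have U_carr: "U \<in> carrier_mat n n" and UTU: "transpose_mat U * U = 1\<^sub>m n"
    using U unfolding orthonormal_mat_def by auto
  have "col U i \<bullet> col U i = 1"
    using arg_cong[OF UTU, of "\<lambda>M. M $$ (i, i)"] U_carr i by simp
  then show ?thesis
    using U i unfolding orthonormal_decomposition_eigenvector[OF U D i] orthonormal_mat_def
    by simp
qed

lemma orthonormal_decomposition_quadratic_form:
  fixes U D :: "real mat"
  assumes U: "orthonormal_mat n U" and D: "D \<in> carrier_mat n n" "diagonal_mat D"
    and f: "f \<in> carrier_vec n"
  shows "f \<bullet> ((U * D * transpose_mat U) *\<^sub>v f) = (\<Sum>i<n. D $$ (i, i) * (col U i \<bullet> f)\<^sup>2)"
proof -
  have U_carr: "U \<in> carrier_mat n n"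
    using U unfolding orthonormal_mat_def by simp
  define g where "g = transpose_mat U *\<^sub>v f"
  have g: "g \<in> carrier_vec n"
    unfolding g_def using U_carr f by simp
  have g_i: "g $ i = col U i \<bullet> f" if "i < n" for i
    unfolding g_def using U_carr that by simp
  have "(U * D * transpose_mat U) *\<^sub>v f = U *\<^sub>v (D *\<^sub>v g)"
    unfolding g_def using U_carr D f by (simp add: assoc_mult_mat_vec[of _ n n _ n])
  moreover have "f \<bullet> (U *\<^sub>v (D *\<^sub>v g)) = g \<bullet> (D *\<^sub>v g)"
    unfolding g_def using U_carr D f by (intro transpose_vec_mult_scalar[symmetric]) auto
  ultimately have "f \<bullet> ((U * D * transpose_mat U) *\<^sub>v f) = g \<bullet> (D *\<^sub>v g)"
    by simp
  also have "\<dots> = (\<Sum>i<n. g $ i * (D *\<^sub>v g) $ i)"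
    using D g by (simp add: scalar_prod_def atLeast0LessThan)
  also have "\<dots> = (\<Sum>i<n. D $$ (i, i) * (col U i \<bullet> f)\<^sup>2)"
    using D g by (intro sum.cong refl)
      (simp add: diagonal_mat_mult_vec[OF D g] g_i power2_eq_square del: index_mult_mat_vec)
  finally show ?thesis .
qed

lemma orthonormal_parseval:
  fixes U :: "real mat"
  assumes U: "orthonormal_mat n U" and f: "f \<in> carrier_vec n"
  shows "f \<bullet> f = (\<Sum>i<n. (col U i \<bullet> f)\<^sup>2)"
proof -
  have "U * 1\<^sub>m n = U"
    using U unfolding orthonormal_mat_def by (metis right_mult_one_mat)
  then have "U * 1\<^sub>m n * transpose_mat U = 1\<^sub>m n"
    using orthonormal_mat_mult_transpose[OF U] by simp
  then show ?thesis
    using orthonormal_decomposition_quadratic_form[OF U one_carrier_mat _ f] f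
    unfolding diagonal_mat_def
    by simp
qed

lemma orthonormal_decomposition_rayleigh:
  fixes U D :: "real mat"
  assumes U: "orthonormal_mat n U" and D: "D \<in> carrier_mat n n" "diagonal_mat D"
    and f: "f \<in> carrier_vec n" "f \<noteq> 0\<^sub>v n"
    and kernel_orth: "\<And>i. i < n \<Longrightarrow> D $$ (i, i) = 0 \<Longrightarrow> col U i \<bullet> f = 0"
  obtains i where "i < n" and "D $$ (i, i) \<noteq> 0"
    and "D $$ (i, i) * (f \<bullet> f) \<le> f \<bullet> ((U * D * transpose_mat U) *\<^sub>v f)"
proof -
  define c where "c i = col U i \<bullet> f" for i
  define R where "R = f \<bullet> ((U * D * transpose_mat U) *\<^sub>v f)"
  have R: "R = (\<Sum>i<n. D $$ (i, i) * (c i)\<^sup>2)"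
    unfolding R_def c_def by (rule orthonormal_decomposition_quadratic_form[OF U D f(1)])
  have ff: "f \<bullet> f = (\<Sum>i<n. (c i)\<^sup>2)"
    unfolding c_def by (rule orthonormal_parseval[OF U f(1)])
  have "f \<bullet> f \<noteq> 0"
    using conjugate_square_eq_0_vec[OF f(1)] f(2) by simp
  then obtain j where j: "j < n" "c j \<noteq> 0"
    unfolding ff by (metis (no_types, lifting) lessThan_iff power_zero_numeral sum.neutral)
  have "\<exists>i<n. D $$ (i, i) \<noteq> 0 \<and> D $$ (i, i) * (f \<bullet> f) \<le> R"
  proof (rule ccontr)
    assume none: "\<not> ?thesis"
    have above: "R < D $$ (i, i) * (f \<bullet> f)" if "i < n" "D $$ (i, i) \<noteq> 0" for i
      using none that by (meson not_le)
    have "(\<Sum>i<n. R * (c i)\<^sup>2) < (\<Sum>i<n. D $$ (i, i) * (f \<bullet> f) * (c i)\<^sup>2)"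
    proof (rule sum_strict_mono_ex1)
      show "\<forall>i\<in>{..<n}. R * (c i)\<^sup>2 \<le> D $$ (i, i) * (f \<bullet> f) * (c i)\<^sup>2"
        using above kernel_orth unfolding c_def by (fastforce intro: mult_right_mono less_imp_le)
      show "\<exists>i\<in>{..<n}. R * (c i)\<^sup>2 < D $$ (i, i) * (f \<bullet> f) * (c i)\<^sup>2"
        using j above kernel_orth unfolding c_def by (fastforce intro: mult_strict_right_mono)
    qed simp
    also have "\<dots> = R * (f \<bullet> f)"
      unfolding R ff by (simp add: sum_distrib_left sum_distrib_right mult_ac)
    also have "\<dots> = (\<Sum>i<n. R * (c i)\<^sup>2)"
      unfolding ff by (simp add: sum_distrib_left)
    finally show False by simp
  qed
  then show thesis
    using that unfolding R_def by blast
qed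

lemma det_orthonormal_conj:
  fixes U M :: "'a :: field mat"
  assumes U: "orthonormal_mat n U" and M: "M \<in> carrier_mat n n"
  shows "det (U * M * transpose_mat U) = det M"
proof -
  have U_carr: "U \<in> carrier_mat n n"
    using U unfolding orthonormal_mat_def by simp
  have "det U * det (transpose_mat U) = det (U * transpose_mat U)"
    using U_carr by (simp add: det_mult[of _ n])
  also have "\<dots> = 1"
    by (simp add: orthonormal_mat_mult_transpose[OF U])
  finally show ?thesis
    using U_carr M by (simp add: det_mult[of _ n] mult.commute mult.left_commute)
qed

section \<open>The pseudo-determinant\<close>

lemma prod_list_map_eq_prod_count:
  "prod_list (map f xs) = (\<Prod>x\<in>set xs. (f x :: 'b :: comm_monoid_mult) ^ count_list xs x)"
proof -
  have "prod_list (map f xs) = prod_mset (image_mset f (mset xs))"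
    by (metis mset_map prod_mset_prod_list)
  also have "\<dots> = (\<Prod>x\<in>set xs. f x ^ count_list xs x)"
    by (simp add: image_prod_mset_multiplicity count_mset)
  finally show ?thesis .
qed

lemma order_prod_linear_factors:
  "Polynomial.order x (\<Prod>a\<leftarrow>xs. [:- a, 1:]) = count_list xs (x :: 'a :: idom)"
proof (induction xs)
  case Nil
  then show ?case by (simp add: order_0I)
next
  case (Cons a xs)
  have "(\<Prod>a\<leftarrow>xs. [:- a, 1:]) \<noteq> 0"
    by (auto simp: prod_list_zero_iff)
  then have "[:- a, 1:] * (\<Prod>a\<leftarrow>xs. [:- a, 1:]) \<noteq> 0"
    by (metis mult_eq_0_iff one_neq_zero pCons_eq_0_iff)
  then have "Polynomial.order x ([:- a, 1:] * (\<Prod>a\<leftarrow>xs. [:- a, 1:])) =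
      Polynomial.order x [:- a, 1:] + Polynomial.order x (\<Prod>a\<leftarrow>xs. [:- a, 1:])"
    by (rule order_mult)
  then show ?case
    using Cons.IH by (simp add: order_linear')
qed

lemma pdet_eq_prod_count:
  assumes K: "K \<in> carrier_mat n n" and cp: "char_poly K = (\<Prod>a\<leftarrow>es. [:- a, 1:])"
  shows "pdet K = (\<Prod>x\<in>set es - {0}. x ^ count_list es x)"
proof -
  have "{x. eigenvalue K x \<and> x \<noteq> 0} = set es - {0}"
    unfolding eigenvalue_root_char_poly[OF K] cp poly_prod_list prod_list_zero_iff by auto
  then show ?thesis
    unfolding pdet_def cp order_prod_linear_factors by simp
qed

lemma prod_one_plus_div_prod_nonzero_ge:
  fixes es :: "real list"
  assumes nonneg: "\<And>a. a \<in> set es \<Longrightarrow> a \<ge> 0" and d: "d \<in> set es" "d \<noteq> 0"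
  shows "1 + 1 / d \<le> prod_list (map (\<lambda>a. 1 + a) es) / (\<Prod>x\<in>set es - {0}. x ^ count_list es x)"
proof -
  define F where "F x = ((1 + x) / x) ^ count_list es x" for x
  have F_ge: "1 \<le> F x" if "x \<in> set es - {0}" for x
    using nonneg[of x] that unfolding F_def by (intro one_le_power) (simp add: field_simps)
  have "prod_list (map (\<lambda>a. 1 + a) es) = (\<Prod>x\<in>set es. (1 + x) ^ count_list es x)"
    by (rule prod_list_map_eq_prod_count)
  also have "\<dots> = (\<Prod>x\<in>set es - {0}. (1 + x) ^ count_list es x)"
    by (rule prod.mono_neutral_right) auto
  finally have "prod_list (map (\<lambda>a. 1 + a) es) / (\<Prod>x\<in>set es - {0}. x ^ count_list es x) =
      (\<Prod>x\<in>set es - {0}. F x)"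
    unfolding F_def by (simp add: prod_dividef power_divide)
  also have "\<dots> = F d * (\<Prod>x\<in>set es - {0} - {d}. F x)"
    using d by (intro prod.remove) auto
  also have "\<dots> \<ge> F d"
  proof -
    have "(\<Prod>x\<in>set es - {0} - {d}. F x) \<ge> 1"
      using F_ge by (intro prod_ge_1) auto
    moreover have "F d \<ge> 1"
      using F_ge d by simp
    ultimately show ?thesis
      by (simp add: mult_le_cancel_left1)
  qed
  moreover have "F d \<ge> (1 + d) / d"
  proof -
    have "count_list es d \<ge> 1"
      using d(1) count_list_0_iff[of es d] by linarith
    moreover have "(1 + d) / d \<ge> 1"
      using nonneg[OF d(1)] d(2) by (simp add: field_simps)
    ultimately show ?thesis
      unfolding F_def by (metis power_increasing power_one_right)
  qed
  ultimately show ?thesis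
    using d(2) by (simp add: add_divide_distrib)
qed

lemma orthonormal_decomposition_char_poly:
  fixes U D :: "'a :: field mat"
  assumes U: "orthonormal_mat n U" and D: "D \<in> carrier_mat n n" "diagonal_mat D"
  shows "char_poly (U * D * transpose_mat U) = (\<Prod>a\<leftarrow>diag_mat D. [:- a, 1:])"
proof -
  have U_carr: "U \<in> carrier_mat n n" and UTU: "transpose_mat U * U = 1\<^sub>m n"
    using U unfolding orthonormal_mat_def by auto
  have "similar_mat (U * D * transpose_mat U) D"
    unfolding similar_mat_def similar_mat_wit_def using U_carr UTU D
    by (intro exI[of _ U] exI[of _ "transpose_mat U"])
      (auto simp: Let_def orthonormal_mat_mult_transpose[OF U])
  moreover have ut: "upper_triangular D"
    using D unfolding diagonal_mat_def upper_triangular_def by auto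
  ultimately show ?thesis
    using char_poly_similar char_poly_upper_triangular[OF D(1) ut] by metis
qed

lemma det_one_plus_orthonormal_decomposition:
  fixes U D :: "'a :: field mat"
  assumes U: "orthonormal_mat n U" and D: "D \<in> carrier_mat n n" "diagonal_mat D"
  shows "det (1\<^sub>m n + U * D * transpose_mat U) = prod_list (map (\<lambda>a. 1 + a) (diag_mat D))"
proof -
  have U_carr: "U \<in> carrier_mat n n"
    using U unfolding orthonormal_mat_def by simp
  have conj: "1\<^sub>m n + U * D * transpose_mat U = U * (1\<^sub>m n + D) * transpose_mat U"
  proof -
    have "U * (1\<^sub>m n + D) * transpose_mat U = (U + U * D) * transpose_mat U"
      using U_carr D by (simp add: mult_add_distrib_mat[OF U_carr one_carrier_mat D(1)])
    also have "\<dots> = 1\<^sub>m n + U * D * transpose_mat U"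
      using U_carr D by (simp add: add_mult_distrib_mat[of _ n n _ _ n] orthonormal_mat_mult_transpose[OF U])
    finally show ?thesis by simp
  qed
  have "det (1\<^sub>m n + U * D * transpose_mat U) = det (1\<^sub>m n + D)"
    unfolding conj using D by (intro det_orthonormal_conj[OF U]) simp
  also have "\<dots> = prod_list (diag_mat (1\<^sub>m n + D))"
    using D by (intro det_upper_triangular) (auto simp: upper_triangular_def diagonal_mat_def)
  also have "diag_mat (1\<^sub>m n + D) = map (\<lambda>a. 1 + a) (diag_mat D)"
    unfolding diag_mat_def using D by auto
  finally show ?thesis .
qed

lemma orthonormal_decomposition_det_div_pdet_ge:
  fixes U D :: "real mat"
  assumes U: "orthonormal_mat n U" and D: "D \<in> carrier_mat n n" "diagonal_mat D"
    and nonneg: "\<And>j. j < n \<Longrightarrow> D $$ (j, j) \<ge> 0" and i: "i < n" "D $$ (i, i) \<noteq> 0"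
  shows "1 + 1 / D $$ (i, i) \<le> det (1\<^sub>m n + U * D * transpose_mat U) / pdet (U * D * transpose_mat U)"
proof -
  have U_carr: "U \<in> carrier_mat n n"
    using U unfolding orthonormal_mat_def by simp
  then have "U * D * transpose_mat U \<in> carrier_mat n n"
    using D by simp
  then have pdet: "pdet (U * D * transpose_mat U) =
      (\<Prod>x\<in>set (diag_mat D) - {0}. x ^ count_list (diag_mat D) x)"
    by (rule pdet_eq_prod_count[OF _ orthonormal_decomposition_char_poly[OF U D]])
  have "set (diag_mat D) = {D $$ (j, j) | j. j < n}"
    unfolding diag_mat_def using D by auto
  then show ?thesis
    unfolding det_one_plus_orthonormal_decomposition[OF U D] pdet using nonneg i
    by (intro prod_one_plus_div_prod_nonzero_ge) auto
qed

section \<open>The Kirchhoff matrix\<close>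

lemma kirchhoff_carrier: "kirchhoff n E \<in> carrier_mat n n"
  unfolding kirchhoff_def degree_matrix_def adjacency_matrix_def by auto

lemma kirchhoff_index:
  assumes "i < n" and "j < n"
  shows "kirchhoff n E $$ (i, j) = (if i = j then real (degree n E i) else 0) - (if E i j then 1 else 0)"
  using assms unfolding kirchhoff_def degree_matrix_def adjacency_matrix_def by auto

lemma degree_eq_sum: "real (degree n E i) = (\<Sum>j<n. if E i j then 1 else 0)"
proof -
  have "{j. j < n \<and> E i j} = {..<n} \<inter> Collect (E i)"
    by auto
  then show ?thesis
    unfolding degree_def by (simp add: sum.If_cases)
qed

lemma kirchhoff_transpose:
  assumes "simple_graph n E"
  shows "transpose_mat (kirchhoff n E) = kirchhoff n E"
proof (rule eq_matI)
  fix i j assume "i < dim_row (kirchhoff n E)" "j < dim_col (kirchhoff n E)"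
  then have "i < n" "j < n"
    using kirchhoff_carrier[of n E] by auto
  moreover have "E i j = E j i"
    using assms unfolding simple_graph_def by blast
  ultimately show "transpose_mat (kirchhoff n E) $$ (i, j) = kirchhoff n E $$ (i, j)"
    using kirchhoff_carrier[of n E] by (auto simp: kirchhoff_index)
qed (use kirchhoff_carrier[of n E] in auto)

lemma kirchhoff_mult_vec:
  assumes x: "x \<in> carrier_vec n" and i: "i < n"
  shows "(kirchhoff n E *\<^sub>v x) $ i = (\<Sum>j<n. if E i j then x $ i - x $ j else 0)"
proof -
  have "(kirchhoff n E *\<^sub>v x) $ i = (\<Sum>j<n. kirchhoff n E $$ (i, j) * x $ j)"
    using i x kirchhoff_carrier[of n E] by (auto simp: scalar_prod_def atLeast0LessThan)
  also have "\<dots> = (\<Sum>j<n. (if i = j then real (degree n E i) * x $ j else 0) - (if E i j then x $ j else 0))"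
    using i by (intro sum.cong) (auto simp: kirchhoff_index algebra_simps)
  also have "\<dots> = real (degree n E i) * x $ i - (\<Sum>j<n. if E i j then x $ j else 0)"
    using i by (simp add: sum_subtractf)
  also have "\<dots> = (\<Sum>j<n. if E i j then x $ i - x $ j else 0)"
    unfolding degree_eq_sum
    by (simp add: sum_distrib_right sum_subtractf[symmetric] if_distrib cong: if_cong)
  finally show ?thesis .
qed

lemma kirchhoff_quadratic_form:
  assumes G: "simple_graph n E" and x: "x \<in> carrier_vec n"
  shows "2 * (x \<bullet> (kirchhoff n E *\<^sub>v x)) = (\<Sum>i<n. \<Sum>j<n. if E i j then (x $ i - x $ j)\<^sup>2 else 0)"
proof -
  have sym: "E i j = E j i" for i j
    using G unfolding simple_graph_def by blast
  define S where "S = (\<Sum>i<n. \<Sum>j<n. if E i j then x $ i * (x $ i - x $ j) else 0)"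
  have "x \<bullet> (kirchhoff n E *\<^sub>v x) = (\<Sum>i<n. x $ i * (kirchhoff n E *\<^sub>v x) $ i)"
    unfolding scalar_prod_def using x kirchhoff_carrier[of n E] by (simp add: atLeast0LessThan)
  also have "\<dots> = S"
    unfolding S_def by (intro sum.cong refl)
      (simp add: kirchhoff_mult_vec[OF x] sum_distrib_left if_distrib cong: if_cong)
  finally have xKx: "x \<bullet> (kirchhoff n E *\<^sub>v x) = S" .
  have "S = (\<Sum>j<n. \<Sum>i<n. if E i j then x $ i * (x $ i - x $ j) else 0)"
    unfolding S_def by (rule sum.swap)
  also have "\<dots> = (\<Sum>i<n. \<Sum>j<n. if E i j then x $ j * (x $ j - x $ i) else 0)"
    by (intro sum.cong refl) (auto simp: sym)
  finally have "2 * S = (\<Sum>i<n. \<Sum>j<n. (if E i j then x $ i * (x $ i - x $ j) else 0) +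
      (if E i j then x $ j * (x $ j - x $ i) else 0))"
    unfolding S_def by (simp add: sum.distrib)
  also have "\<dots> = (\<Sum>i<n. \<Sum>j<n. if E i j then (x $ i - x $ j)\<^sup>2 else 0)"
    by (intro sum.cong refl) (auto simp: power2_eq_square algebra_simps)
  finally show ?thesis
    unfolding xKx .
qed

lemma kirchhoff_quadratic_form_eq_0_imp_const:
  assumes G: "simple_graph n E" and C: "connected_graph n E"
    and x: "x \<in> carrier_vec n" and q: "x \<bullet> (kirchhoff n E *\<^sub>v x) = 0" and i: "i < n"
  shows "x $ i = x $ 0"
proof -
  have total: "(\<Sum>a<n. \<Sum>b<n. if E a b then (x $ a - x $ b)\<^sup>2 else 0) = 0"
    using kirchhoff_quadratic_form[OF G x] q by simp
  have edge: "x $ a = x $ b" if "E a b" for a b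
  proof -
    have ab: "a < n" "b < n"
      using G that unfolding simple_graph_def by auto
    have "(\<Sum>c<n. if E a c then (x $ a - x $ c)\<^sup>2 else 0) = 0"
      using total ab by (subst (asm) sum_nonneg_eq_0_iff) (auto intro!: sum_nonneg)
    then have "(if E a b then (x $ a - x $ b)\<^sup>2 else 0) = 0"
      using ab by (subst (asm) sum_nonneg_eq_0_iff) auto
    then show ?thesis
      using that by simp
  qed
  have "E\<^sup>*\<^sup>* 0 i"
    using C i unfolding connected_graph_def by auto
  then show ?thesis
  proof (induction rule: rtranclp_induct)
    case base
    then show ?case by simp
  next
    case (step k j)
    then show ?case using edge[of k j] by simp
  qed
qed

lemma kirchhoff_spectral_decomposition:
  assumes G: "simple_graph n E" and C: "connected_graph n E"
  obtains U D where "orthonormal_mat n U" and "D \<in> carrier_mat n n" and "diagonal_mat D"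
    and "kirchhoff n E = U * D * transpose_mat U"
    and "\<And>i. i < n \<Longrightarrow> D $$ (i, i) \<ge> 0"
    and "\<And>i k. i < n \<Longrightarrow> D $$ (i, i) = 0 \<Longrightarrow> k < n \<Longrightarrow> col U i $ k = col U i $ 0"
proof -
  obtain U D where U: "orthonormal_mat n U" and D: "D \<in> carrier_mat n n" "diagonal_mat D"
    and K: "kirchhoff n E = U * D * transpose_mat U"
    using real_symmetric_mat_spectral_decomposition[OF kirchhoff_carrier kirchhoff_transpose[OF G]]
    by (elim exE conjE)
  note col = orthonormal_mat_col_carrier[OF U]
  have diag: "D $$ (i, i) = col U i \<bullet> (kirchhoff n E *\<^sub>v col U i)" if "i < n" for i
    unfolding K by (rule orthonormal_decomposition_diag_eq[OF U D that])
  have "2 * D $$ (i, i) \<ge> 0" if "i < n" for i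
    unfolding diag[OF that] kirchhoff_quadratic_form[OF G col] by (intro sum_nonneg) auto
  then have nonneg: "D $$ (i, i) \<ge> 0" if "i < n" for i
    using that by simp
  have kernel: "col U i $ k = col U i $ 0" if "i < n" "D $$ (i, i) = 0" "k < n" for i k
  proof (rule kirchhoff_quadratic_form_eq_0_imp_const[OF G C col _ that(3)])
    show "col U i \<bullet> (kirchhoff n E *\<^sub>v col U i) = 0"
      using diag[OF that(1)] that(2) by simp
  qed
  show thesis
    by (rule that[OF U D K nonneg kernel])
qed

section \<open>Cut vectors and the Cheeger constant\<close>

definition cut_vector :: "nat \<Rightarrow> nat set \<Rightarrow> real vec" where
  "cut_vector n S = vec n (\<lambda>i. if i \<in> S then real n - real (card S) else - real (card S))"

lemma sum_lessThan_if_subset: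
  assumes "S \<subseteq> {..<n}"
  shows "(\<Sum>k<n. if k \<in> S then a else b) = real (card S) * a + (real n - real (card S)) * (b :: real)"
proof -
  have fin: "finite S"
    using assms finite_subset by blast
  have "{..<n} \<inter> S = S"
    using assms by auto
  then have "(\<Sum>k<n. if k \<in> S then a else b) = (\<Sum>k\<in>S. a) + (\<Sum>k\<in>{..<n} - S. b)"
    by (simp add: sum.If_cases Diff_eq)
  moreover have "card ({..<n} - S) = n - card S"
    using assms fin by (simp add: card_Diff_subset)
  ultimately show ?thesis
    using card_mono[OF _ assms] by (simp add: of_nat_diff)
qed

lemma cut_vector_index:
  "i < n \<Longrightarrow> cut_vector n S $ i = (if i \<in> S then real n - real (card S) else - real (card S))"
  unfolding cut_vector_def by simp

lemma cut_vector_orthogonal_const: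
  assumes S: "S \<subseteq> {..<n}" and v: "v \<in> carrier_vec n" and const: "\<And>k. k < n \<Longrightarrow> v $ k = v $ 0"
  shows "v \<bullet> cut_vector n S = 0"
proof -
  have "v \<bullet> cut_vector n S = (\<Sum>k<n. v $ k * cut_vector n S $ k)"
    by (simp add: scalar_prod_def cut_vector_def atLeast0LessThan)
  also have "\<dots> = (\<Sum>k<n. v $ 0 * cut_vector n S $ k)"
    by (intro sum.cong refl) (metis const lessThan_iff)
  also have "\<dots> = v $ 0 * (\<Sum>k<n. cut_vector n S $ k)"
    by (simp add: sum_distrib_left)
  also have "(\<Sum>k<n. cut_vector n S $ k) = 0"
    using sum_lessThan_if_subset[OF S, of "real n - real (card S)" "- real (card S)"]
    by (simp add: cut_vector_index algebra_simps)
  finally show ?thesis by simp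
qed

lemma cut_vector_norm:
  assumes S: "S \<subseteq> {..<n}"
  shows "cut_vector n S \<bullet> cut_vector n S = real (card S) * (real n - real (card S)) * real n"
proof -
  have "cut_vector n S \<bullet> cut_vector n S =
      (\<Sum>k<n. if k \<in> S then (real n - real (card S))\<^sup>2 else (real (card S))\<^sup>2)"
    by (auto simp: scalar_prod_def cut_vector_def atLeast0LessThan power2_eq_square intro!: sum.cong)
  also have "\<dots> = real (card S) * (real n - real (card S)) * real n"
    unfolding sum_lessThan_if_subset[OF S] by (simp add: power2_eq_square algebra_simps)
  finally show ?thesis .
qed

lemma kirchhoff_cut_vector:
  assumes G: "simple_graph n E" and S: "S \<subseteq> {..<n}"
  shows "cut_vector n S \<bullet> (kirchhoff n E *\<^sub>v cut_vector n S) =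
    (real n)\<^sup>2 * real (card (edge_boundary n E S))"
proof -
  define f where "f = cut_vector n S"
  define I where "I i j = (if E i j \<and> i \<in> S \<and> j \<notin> S then 1 else 0 :: real)" for i j
  have sym: "E i j = E j i" for i j
    using G unfolding simple_graph_def by blast
  have edge_term: "(if E i j then (f $ i - f $ j)\<^sup>2 else 0) = (real n)\<^sup>2 * (I i j + I j i)"
    if "i < n" "j < n" for i j
    using that sym[of i j] unfolding I_def f_def
    by (cases "i \<in> S"; cases "j \<in> S") (simp_all add: cut_vector_index power2_eq_square)
  have count: "(\<Sum>i<n. \<Sum>j<n. I i j) = real (card (edge_boundary n E S))"
  proof -
    have "(\<Sum>i<n. \<Sum>j<n. I i j) = (\<Sum>p\<in>{..<n} \<times> {..<n}. I (fst p) (snd p))"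
      by (simp add: sum.cartesian_product case_prod_beta')
    also have "\<dots> = real (card ({..<n} \<times> {..<n} \<inter> {p. E (fst p) (snd p) \<and> fst p \<in> S \<and> snd p \<notin> S}))"
      unfolding I_def by (simp add: sum.If_cases)
    also have "{..<n} \<times> {..<n} \<inter> {p. E (fst p) (snd p) \<and> fst p \<in> S \<and> snd p \<notin> S} = edge_boundary n E S"
      unfolding edge_boundary_def using S by auto
    finally show ?thesis .
  qed
  have "2 * (f \<bullet> (kirchhoff n E *\<^sub>v f)) = (\<Sum>i<n. \<Sum>j<n. if E i j then (f $ i - f $ j)\<^sup>2 else 0)"
    unfolding f_def by (rule kirchhoff_quadratic_form[OF G]) (simp add: cut_vector_def)
  also have "\<dots> = (\<Sum>i<n. \<Sum>j<n. (real n)\<^sup>2 * (I i j + I j i))"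
    by (intro sum.cong refl) (simp add: edge_term)
  also have "\<dots> = (real n)\<^sup>2 * ((\<Sum>i<n. \<Sum>j<n. I i j) + (\<Sum>i<n. \<Sum>j<n. I j i))"
    by (simp only: sum_distrib_left[symmetric] sum.distrib distrib_left)
  also have "(\<Sum>i<n. \<Sum>j<n. I j i) = (\<Sum>i<n. \<Sum>j<n. I i j)"
    by (rule sum.swap)
  finally show ?thesis
    unfolding f_def count by simp
qed

lemma cheeger_attained:
  assumes "n \<ge> 2"
  obtains S where "S \<subseteq> {..<n}" and "0 < card S" and "real (card S) \<le> real n / 2"
    and "cheeger n E = real (card (edge_boundary n E S)) / real (card S)"
proof -
  define \<S> where "\<S> = {S. S \<subseteq> {0..<n} \<and> 0 < card S \<and> real (card S) \<le> real n / 2}"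
  have "finite \<S>"
    unfolding \<S>_def by (rule finite_subset[of _ "Pow {0..<n}"]) auto
  moreover have "{0} \<in> \<S>"
    using assms unfolding \<S>_def by auto
  ultimately have "cheeger n E \<in> (\<lambda>S. real (card (edge_boundary n E S)) / real (card S)) ` \<S>"
    unfolding cheeger_def \<S>_def[symmetric] by (intro Min_in) auto
  then obtain S where "S \<in> \<S>" and "cheeger n E = real (card (edge_boundary n E S)) / real (card S)"
    by blast
  then show thesis
    using that[of S] unfolding \<S>_def by (simp add: atLeast0LessThan)
qed

lemma cut_vector_rayleigh_le:
  assumes G: "simple_graph n E" and S: "S \<subseteq> {..<n}" "0 < card S" "real (card S) \<le> real n / 2"
  shows "cut_vector n S \<bullet> (kirchhoff n E *\<^sub>v cut_vector n S) \<le>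
    2 * (real (card (edge_boundary n E S)) / real (card S)) * (cut_vector n S \<bullet> cut_vector n S)"
proof -
  define b where "b = real (card (edge_boundary n E S))"
  define s where "s = real (card S)"
  have "real n \<le> 2 * (real n - s)"
    using S(3) unfolding s_def by simp
  then have "real n * (real n * b) \<le> 2 * (real n - s) * (real n * b)"
    by (intro mult_right_mono) (auto simp: b_def)
  then have "(real n)\<^sup>2 * b \<le> 2 * b * (real n - s) * real n"
    by (simp add: power2_eq_square algebra_simps)
  also have "\<dots> = 2 * (b / s) * (s * (real n - s) * real n)"
    using S(2) unfolding s_def by (simp add: field_simps)
  finally show ?thesis
    unfolding kirchhoff_cut_vector[OF G S(1)] cut_vector_norm[OF S(1)] b_def s_def .
qed

lemma kirchhoff_nonzero_eigenvalue_le_cheeger: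
  assumes G: "simple_graph n E" and n: "n \<ge> 2"
    and U: "orthonormal_mat n U" and D: "D \<in> carrier_mat n n" "diagonal_mat D"
    and K: "kirchhoff n E = U * D * transpose_mat U"
    and kernel: "\<And>i k. i < n \<Longrightarrow> D $$ (i, i) = 0 \<Longrightarrow> k < n \<Longrightarrow> col U i $ k = col U i $ 0"
  obtains i where "i < n" and "D $$ (i, i) \<noteq> 0" and "D $$ (i, i) \<le> 2 * cheeger n E"
proof -
  obtain S where S: "S \<subseteq> {..<n}" "0 < card S" "real (card S) \<le> real n / 2"
    and h: "cheeger n E = real (card (edge_boundary n E S)) / real (card S)"
    by (rule cheeger_attained[OF n])
  define f where "f = cut_vector n S"
  have f: "f \<in> carrier_vec n"
    unfolding f_def cut_vector_def by simp
  have ff: "f \<bullet> f > 0"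
    unfolding f_def cut_vector_norm[OF S(1)] using S(2,3) n by simp
  then have f_nonzero: "f \<noteq> 0\<^sub>v n"
    by auto
  have kernel_orth: "col U j \<bullet> f = 0" if "j < n" "D $$ (j, j) = 0" for j
    unfolding f_def
    by (rule cut_vector_orthogonal_const[OF S(1) orthonormal_mat_col_carrier[OF U] kernel[OF that]])
  obtain i where i: "i < n" "D $$ (i, i) \<noteq> 0"
    and rayleigh: "D $$ (i, i) * (f \<bullet> f) \<le> f \<bullet> (kirchhoff n E *\<^sub>v f)"
    using orthonormal_decomposition_rayleigh[OF U D f f_nonzero kernel_orth] unfolding K by blast
  have "D $$ (i, i) * (f \<bullet> f) \<le> 2 * cheeger n E * (f \<bullet> f)"
    using rayleigh cut_vector_rayleigh_le[OF G S] unfolding h f_def by linarith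
  then have "D $$ (i, i) \<le> 2 * cheeger n E"
    using ff by simp
  with i show thesis
    by (rule that)
qed

lemma one_div_two_mult_minus_one_le:
  fixes d h t :: real
  assumes "0 < d" and "d \<le> 2 * h" and "1 + 1 / d \<le> t"
  shows "1 / (2 * (t - 1)) \<le> h"
proof -
  have "1 \<le> d * (t - 1)"
    using assms(1,3) by (simp add: field_simps)
  moreover have "t - 1 > 0"
    using assms(1,3) by (smt (verit) divide_pos_pos)
  ultimately have "1 / (2 * (t - 1)) \<le> d / 2"
    by (simp add: field_simps)
  also have "\<dots> \<le> h"
    using assms(2) by simp
  finally show ?thesis .
qed

theorem mainTheorem5:
  fixes n :: nat and E :: "nat \<Rightarrow> nat \<Rightarrow> bool"
  assumes "simple_graph n E" and "connected_graph n E" and "n \<ge> 2"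
  shows "cheeger n E \<ge> 1 / (2 * (tau n E - 1))"
proof -
  obtain U D where U: "orthonormal_mat n U" and D: "D \<in> carrier_mat n n" "diagonal_mat D"
    and K: "kirchhoff n E = U * D * transpose_mat U"
    and nonneg: "\<And>i. i < n \<Longrightarrow> D $$ (i, i) \<ge> 0"
    and kernel: "\<And>i k. i < n \<Longrightarrow> D $$ (i, i) = 0 \<Longrightarrow> k < n \<Longrightarrow> col U i $ k = col U i $ 0"
    by (rule kirchhoff_spectral_decomposition[OF assms(1,2)]) (rule that)
  obtain i where i: "i < n" "D $$ (i, i) \<noteq> 0" and le_cheeger: "D $$ (i, i) \<le> 2 * cheeger n E"
    using kirchhoff_nonzero_eigenvalue_le_cheeger[OF assms(1,3) U D K kernel] by blast
  have "1 + 1 / D $$ (i, i) \<le> tau n E"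
    unfolding tau_def K by (rule orthonormal_decomposition_det_div_pdet_ge[OF U D nonneg i])
  moreover have "D $$ (i, i) > 0"
    using nonneg[OF i(1)] i(2) by simp
  ultimately show ?thesis
    using le_cheeger by (intro one_div_two_mult_minus_one_le)
qed

end
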